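(* Let $v=\{v_n\}_{n\ge0}$ be a nondecreasing sequence of positive numbers and let $\theta$ be an inner function. Then for all $f,g\in H^2$, $$\|T_{\overline\theta}f\|_{v,0}\le\|f\|_{v,0}\qquad\text{and}\qquad\|g\|_{v,0}\le\|g\theta\|_{v,0}$$ (with values in $[0,\infty]$).
   Context: $H^2$ is the Hardy space on the unit disk, identified with boundary functions on $\mathbb T$; $\widehat f(n)$ denotes the $n$th Taylor/Fourier coefficient. Inner function: $\theta\in H^\infty$ with $|\theta|=1$ a.e. on $\mathbb T$. $T_{\overline\theta}f=P_+(\overline\theta f)$ where $P_+F=\sum_{n\ge0}\widehat F(n)z^n$. For a holomorphic $f=\sum_{n\ge0}\widehat f(n)z^n$, $\|f\|_{v,0}:=\big(\sum_{n\ge0}v_n|\widehat f(n)|^2\big)^{1/2}$. *)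

theory Defs
  imports "HOL-Analysis.Analysis"
begin

text \<open>Functions on the circle T are represented by their values on [0, 2 pi],
  parametrised by t with z = e^(i t); the measure is Lebesgue measure on [0, 2 pi].\<close>

definition circ :: "real measure" where
  "circ = lebesgue_on {0..2*pi}"

definition fourier_coeff :: "(real \<Rightarrow> complex) \<Rightarrow> int \<Rightarrow> complex" where
  "fourier_coeff f n = (integral\<^sup>L circ (\<lambda>t. f t * cis (- (of_int n * t)))) / complex_of_real (2*pi)"

definition L2_circ :: "(real \<Rightarrow> complex) set" where
  "L2_circ = {f. f \<in> borel_measurable circ \<and> integrable circ (\<lambda>t. (cmod (f t))\<^sup>2)}"

text \<open>Hardy space H^2, identified with boundary functions.\<close>
definition H2 :: "(real \<Rightarrow> complex) set" where
  "H2 = {f \<in> L2_circ. \<forall>n::int. n < 0 \<longrightarrow> fourier_coeff f n = 0}"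

definition Hinf :: "(real \<Rightarrow> complex) set" where
  "Hinf = {f. f \<in> borel_measurable circ \<and> (\<exists>C. AE t in circ. cmod (f t) \<le> C)
              \<and> (\<forall>n::int. n < 0 \<longrightarrow> fourier_coeff f n = 0)}"

definition inner_fun :: "(real \<Rightarrow> complex) \<Rightarrow> bool" where
  "inner_fun \<theta> \<longleftrightarrow> \<theta> \<in> Hinf \<and> (AE t in circ. cmod (\<theta> t) = 1)"

text \<open>Taylor coefficients of (the analytic part of) a function: hat f(n), n \<ge> 0.
  P_+ F = sum_{n\<ge>0} hat F(n) z^n is thus represented by its Taylor coefficients.\<close>
definition Pplus_coeffs :: "(real \<Rightarrow> complex) \<Rightarrow> nat \<Rightarrow> complex" where
  "Pplus_coeffs F n = fourier_coeff F (int n)"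

definition toeplitz_conj_coeffs :: "(real \<Rightarrow> complex) \<Rightarrow> (real \<Rightarrow> complex) \<Rightarrow> nat \<Rightarrow> complex" where
  "toeplitz_conj_coeffs \<theta> f = Pplus_coeffs (\<lambda>t. cnj (\<theta> t) * f t)"

definition ennsqrt :: "ennreal \<Rightarrow> ennreal" where
  "ennsqrt x = (if x = top then top else ennreal (sqrt (enn2real x)))"

definition vnorm :: "(nat \<Rightarrow> real) \<Rightarrow> (nat \<Rightarrow> complex) \<Rightarrow> ennreal" where
  "vnorm v a = ennsqrt (\<Sum>n. ennreal (v n * (cmod (a n))\<^sup>2))"

end

theory Submission
  imports Defs
begin

text \<open>Write \<open>T f = P\<^sub>+(cnj \<theta> * f)\<close>. For a nondecreasing weight, Abel summation expresses
  \<open>\<Sum>n. v\<^sub>n |a\<^sub>n|\<^sup>2\<close> as a nonnegative combination of the tails \<open>\<Sum>n\<ge>k. |a\<^sub>n|\<^sup>2\<close>, so both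
  inequalities reduce to inequalities between tails. To bound the \<open>k\<close>-th tail of \<open>T f\<close>, remove
  the first \<open>k\<close> Taylor terms of \<open>f\<close>, leaving \<open>h\<close>: since \<open>\<theta>\<close> has no negative frequencies,
  multiplication by \<open>cnj \<theta>\<close> cannot move the removed frequencies up to \<open>n \<ge> k\<close>, so \<open>cnj \<theta> * h\<close>
  and \<open>cnj \<theta> * f\<close> have the same coefficients beyond \<open>k\<close>. Bessel's inequality, \<open>|\<theta>| = 1\<close> and
  Parseval's identity for \<open>h\<close> then bound that tail by the \<open>k\<close>-th tail of \<open>f\<close>. The second
  inequality is the first one applied to \<open>g \<theta> \<in> H\<^sup>2\<close>, because \<open>T (g \<theta>) = g\<close>. Parseval's identity
  rests on the density of trigonometric polynomials in \<open>L\<^sup>2\<close>, obtained from Stone-Weierstrass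
  on the circle.\<close>

lemma space_circ [simp]: "space circ = {0..2*pi}"
  by (simp add: circ_def)

lemma sets_circ: "A \<in> sets circ \<longleftrightarrow> A \<subseteq> {0..2*pi} \<and> A \<in> sets lebesgue"
  unfolding circ_def by (rule sets_restrict_space_iff) simp

lemma measure_circ: "A \<subseteq> {0..2*pi} \<Longrightarrow> measure circ A = measure lebesgue A"
  unfolding circ_def by (rule measure_restrict_space) auto

interpretation circ: finite_measure circ
  unfolding circ_def by (rule finite_measure_lebesgue_on) auto

lemma borel_measurable_circI:
  "continuous_on {0..2*pi} g \<Longrightarrow> g \<in> borel_measurable circ"
  unfolding circ_def by (rule continuous_imp_measurable_on_sets_lebesgue) auto

lemma borel_measurable_cnj [measurable]:
  "f \<in> borel_measurable M \<Longrightarrow> (\<lambda>x. cnj (f x)) \<in> borel_measurable M"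
  using measurable_compose[of f M borel cnj borel] borel_measurable_continuous_onI[of cnj]
  by (auto intro: continuous_intros)

definition fourier_basis :: "int \<Rightarrow> real \<Rightarrow> complex" where
  "fourier_basis n t = cis (of_int n * t)"

lemma continuous_on_fourier_basis: "continuous_on S (fourier_basis n)"
  unfolding fourier_basis_def by (intro continuous_intros)

lemma borel_measurable_fourier_basis [measurable]: "fourier_basis n \<in> borel_measurable circ"
  by (rule borel_measurable_circI[OF continuous_on_fourier_basis])

lemma norm_fourier_basis [simp]: "cmod (fourier_basis n t) = 1"
  by (simp add: fourier_basis_def)

lemma cnj_fourier_basis: "cnj (fourier_basis n t) = fourier_basis (-n) t"
  by (simp add: fourier_basis_def cis_cnj)

lemma fourier_basis_mult: "fourier_basis n t * fourier_basis m t = fourier_basis (n + m) t"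
  by (simp add: fourier_basis_def cis_mult distrib_right)

lemma integral_fourier_basis:
  "integral\<^sup>L circ (fourier_basis k) = (if k = 0 then 2*pi else 0)"
proof (cases "k = 0")
  case True
  then have "fourier_basis k = (\<lambda>_. 1)" by (auto simp: fourier_basis_def fun_eq_iff)
  then show ?thesis using True by (simp add: measure_circ scaleR_conv_of_real)
next
  case False
  have "integrable circ (fourier_basis k)"
    by (rule circ.integrable_const_bound[where B=1]) auto
  then have lebesgue: "(fourier_basis k has_integral integral\<^sup>L circ (fourier_basis k)) {0..2*pi}"
    using has_integral_integral_lebesgue_on[of "{0..2*pi}"] by (simp add: circ_def)
  define F where "F t = cis (of_int k * t) / (\<i> * of_int k)" for t
  have "(fourier_basis k has_integral (F (2*pi) - F 0)) {0..2*pi}"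
  proof (rule fundamental_theorem_of_calculus)
    fix x assume "x \<in> {0..2*pi}"
    have "((\<lambda>t. cis (of_int k * t)) has_derivative
          (\<lambda>h. (of_int k * h) *\<^sub>R (\<i> * cis (of_int k * x)))) (at x within {0..2*pi})"
      by (auto intro!: derivative_eq_intros)
    from has_derivative_mult_right[OF this, of "1 / (\<i> * of_int k)"]
    have "(F has_derivative (\<lambda>h. (1 / (\<i> * of_int k)) * ((of_int k * h) *\<^sub>R (\<i> * cis (of_int k * x)))))
        (at x within {0..2*pi})"
      by (simp add: F_def[abs_def])
    moreover have "(\<lambda>h. (1 / (\<i> * of_int k)) * ((of_int k * h) *\<^sub>R (\<i> * cis (of_int k * x))))
        = (\<lambda>h. h *\<^sub>R fourier_basis k x)"
      using False by (auto simp: fourier_basis_def fun_eq_iff scaleR_conv_of_real field_simps)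
    ultimately show "(F has_vector_derivative fourier_basis k x) (at x within {0..2*pi})"
      by (simp add: has_vector_derivative_def)
  qed auto
  moreover have "F (2*pi) = F 0"
    by (simp add: F_def cis_conv_exp mult.commute)
  ultimately show ?thesis using has_integral_unique[OF lebesgue] False by simp
qed

lemma L2_circ_measurable: "F \<in> L2_circ \<Longrightarrow> F \<in> borel_measurable circ"
  by (simp add: L2_circ_def)

lemma L2_circ_integrable_square: "F \<in> L2_circ \<Longrightarrow> integrable circ (\<lambda>t. (cmod (F t))\<^sup>2)"
  by (simp add: L2_circ_def)

lemma L2_circ_bounded:
  assumes "F \<in> borel_measurable circ" "AE t in circ. cmod (F t) \<le> B"
  shows "F \<in> L2_circ"
proof -
  have "integrable circ (\<lambda>t. (cmod (F t))\<^sup>2)"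
  proof (rule circ.integrable_const_bound[where B="B\<^sup>2"])
    show "AE t in circ. norm ((cmod (F t))\<^sup>2) \<le> B\<^sup>2"
      using assms(2) by eventually_elim (simp add: power_mono)
  qed (use assms(1) in measurable)
  then show ?thesis using assms by (simp add: L2_circ_def)
qed

lemma L2_circ_continuous:
  assumes "continuous_on {0..2*pi} F"
  shows "F \<in> L2_circ"
proof -
  obtain B where "\<forall>t\<in>{0..2*pi}. cmod (F t) \<le> B"
    using compact_imp_bounded[OF compact_continuous_image[OF assms compact_Icc]]
    by (auto simp: bounded_iff)
  then show ?thesis
    by (intro L2_circ_bounded[of _ B] borel_measurable_circI assms AE_I2) auto
qed

lemma L2_circ_fourier_basis [simp]: "fourier_basis n \<in> L2_circ"
  by (rule L2_circ_continuous[OF continuous_on_fourier_basis])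

lemma L2_circ_indicator: "A \<in> sets circ \<Longrightarrow> (\<lambda>t. indicator A t :: complex) \<in> L2_circ"
  by (rule L2_circ_bounded[where B=1]) (auto simp: indicator_def)

lemma norm_add_square_le:
  fixes a b :: "'a :: real_normed_vector"
  shows "(norm (a + b))\<^sup>2 \<le> 2 * (norm a)\<^sup>2 + 2 * (norm b)\<^sup>2"
proof -
  have "(norm (a + b))\<^sup>2 \<le> (norm a + norm b)\<^sup>2"
    by (simp add: power_mono norm_triangle_ineq)
  also have "\<dots> \<le> 2 * (norm a)\<^sup>2 + 2 * (norm b)\<^sup>2"
    using sum_squares_bound[of "norm a" "norm b"] by (simp add: power2_sum)
  finally show ?thesis .
qed

lemma L2_circ_add [simp]:
  assumes "F \<in> L2_circ" "G \<in> L2_circ"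
  shows "(\<lambda>t. F t + G t) \<in> L2_circ"
proof -
  have "integrable circ (\<lambda>t. (cmod (F t + G t))\<^sup>2)"
  proof (rule Bochner_Integration.integrable_bound)
    show "integrable circ (\<lambda>t. 2 * (cmod (F t))\<^sup>2 + 2 * (cmod (G t))\<^sup>2)"
      using assms by (simp add: L2_circ_integrable_square)
    show "AE t in circ. norm ((cmod (F t + G t))\<^sup>2) \<le> norm (2 * (cmod (F t))\<^sup>2 + 2 * (cmod (G t))\<^sup>2)"
      using norm_add_square_le by (intro AE_I2) simp
  qed (use L2_circ_measurable[OF assms(1)] L2_circ_measurable[OF assms(2)] in measurable)
  then show ?thesis
    using L2_circ_measurable[OF assms(1)] L2_circ_measurable[OF assms(2)]
    by (simp add: L2_circ_def)
qed

lemma L2_circ_cmult [simp]: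
  assumes "F \<in> L2_circ"
  shows "(\<lambda>t. c * F t) \<in> L2_circ"
proof -
  have "(\<lambda>t. c * F t) \<in> borel_measurable circ"
    using L2_circ_measurable[OF assms] by measurable
  then show ?thesis using assms by (simp add: L2_circ_def norm_mult power_mult_distrib)
qed

lemma L2_circ_diff [simp]:
  assumes "F \<in> L2_circ" "G \<in> L2_circ"
  shows "(\<lambda>t. F t - G t) \<in> L2_circ"
  using L2_circ_add[OF assms(1) L2_circ_cmult[OF assms(2), of "-1"]] by simp

lemma L2_circ_sum [simp]:
  "(\<And>i. i \<in> I \<Longrightarrow> F i \<in> L2_circ) \<Longrightarrow> (\<lambda>t. \<Sum>i\<in>I. F i t) \<in> L2_circ"
  by (induction I rule: infinite_finite_induct) (simp_all add: L2_circ_bounded[where B=0])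

lemma L2_circ_mult_bounded:
  assumes "F \<in> L2_circ" "G \<in> borel_measurable circ" "AE t in circ. cmod (G t) \<le> B"
  shows "(\<lambda>t. G t * F t) \<in> L2_circ"
proof -
  have "integrable circ (\<lambda>t. (cmod (G t * F t))\<^sup>2)"
  proof (rule Bochner_Integration.integrable_bound)
    show "integrable circ (\<lambda>t. B\<^sup>2 * (cmod (F t))\<^sup>2)"
      using assms by (simp add: L2_circ_integrable_square)
    show "AE t in circ. norm ((cmod (G t * F t))\<^sup>2) \<le> norm (B\<^sup>2 * (cmod (F t))\<^sup>2)"
      using assms(3)
    proof eventually_elim
      case (elim t)
      then have "(cmod (G t))\<^sup>2 \<le> B\<^sup>2" by (simp add: power_mono)
      then show ?case by (simp add: norm_mult power_mult_distrib mult_right_mono)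
    qed
  qed (use L2_circ_measurable[OF assms(1)] assms(2) in measurable)
  then show ?thesis
    using L2_circ_measurable[OF assms(1)] assms(2) by (simp add: L2_circ_def)
qed

lemma integrable_L2_circ_mult_cnj:
  assumes "F \<in> L2_circ" "G \<in> L2_circ"
  shows "integrable circ (\<lambda>t. F t * cnj (G t))"
proof (rule Bochner_Integration.integrable_bound)
  show "integrable circ (\<lambda>t. (cmod (F t))\<^sup>2 + (cmod (G t))\<^sup>2)"
    using assms by (simp add: L2_circ_integrable_square)
  show "AE t in circ. norm (F t * cnj (G t)) \<le> norm ((cmod (F t))\<^sup>2 + (cmod (G t))\<^sup>2)"
  proof (intro AE_I2)
    fix t
    have "2 * (cmod (F t) * cmod (G t)) \<le> (cmod (F t))\<^sup>2 + (cmod (G t))\<^sup>2"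
      using sum_squares_bound[of "cmod (F t)" "cmod (G t)"] by (simp add: mult.assoc)
    moreover have "0 \<le> cmod (F t) * cmod (G t)" by simp
    ultimately have "cmod (F t) * cmod (G t) \<le> (cmod (F t))\<^sup>2 + (cmod (G t))\<^sup>2"
      by linarith
    then show "norm (F t * cnj (G t)) \<le> norm ((cmod (F t))\<^sup>2 + (cmod (G t))\<^sup>2)"
      by (simp add: norm_mult)
  qed
qed (use L2_circ_measurable[OF assms(1)] L2_circ_measurable[OF assms(2)] in measurable)

section \<open>Orthogonality and Bessel's inequality\<close>

definition L2_inner :: "(real \<Rightarrow> complex) \<Rightarrow> (real \<Rightarrow> complex) \<Rightarrow> complex" where
  "L2_inner F G = integral\<^sup>L circ (\<lambda>t. F t * cnj (G t))"

definition L2_sqnorm :: "(real \<Rightarrow> complex) \<Rightarrow> real" where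
  "L2_sqnorm F = integral\<^sup>L circ (\<lambda>t. (cmod (F t))\<^sup>2)"

lemma L2_sqnorm_nonneg: "0 \<le> L2_sqnorm F"
  by (simp add: L2_sqnorm_def)

lemma of_real_L2_sqnorm: "complex_of_real (L2_sqnorm F) = L2_inner F F"
proof -
  have "L2_inner F F = integral\<^sup>L circ (\<lambda>t. complex_of_real ((cmod (F t))\<^sup>2))"
    unfolding L2_inner_def by (simp only: complex_norm_square)
  then show ?thesis by (simp only: integral_complex_of_real L2_sqnorm_def)
qed

lemma fourier_coeff_eq_L2_inner: "fourier_coeff F n = L2_inner F (fourier_basis n) / (2*pi)"
  by (simp add: fourier_coeff_def L2_inner_def fourier_basis_def cis_cnj)

lemma L2_inner_commute: "L2_inner G F = cnj (L2_inner F G)"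
proof -
  have "cnj (L2_inner F G) = integral\<^sup>L circ (\<lambda>t. cnj (F t * cnj (G t)))"
    by (simp only: L2_inner_def Bochner_Integration.integral_cnj[symmetric])
  then show ?thesis by (simp add: L2_inner_def mult.commute)
qed

lemma L2_inner_fourier_basis:
  "L2_inner (fourier_basis n) (fourier_basis m) = (if n = m then 2*pi else 0)"
proof -
  have "(\<lambda>t. fourier_basis n t * cnj (fourier_basis m t)) = fourier_basis (n - m)"
    by (auto simp: fun_eq_iff cnj_fourier_basis fourier_basis_mult)
  then show ?thesis by (simp add: L2_inner_def integral_fourier_basis)
qed

lemma L2_inner_sum_left:
  assumes "finite I" "G \<in> L2_circ" "\<And>n. n \<in> I \<Longrightarrow> H n \<in> L2_circ"
  shows "L2_inner (\<lambda>t. \<Sum>n\<in>I. a n * H n t) G = (\<Sum>n\<in>I. a n * L2_inner (H n) G)"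
proof -
  have "L2_inner (\<lambda>t. \<Sum>n\<in>I. a n * H n t) G
      = integral\<^sup>L circ (\<lambda>t. \<Sum>n\<in>I. a n * (H n t * cnj (G t)))"
    unfolding L2_inner_def by (simp add: sum_distrib_right mult.assoc)
  also have "\<dots> = (\<Sum>n\<in>I. a n * L2_inner (H n) G)"
    using assms integrable_L2_circ_mult_cnj by (simp add: L2_inner_def)
  finally show ?thesis .
qed

lemma L2_inner_diff_left:
  assumes "F \<in> L2_circ" "G \<in> L2_circ" "H \<in> L2_circ"
  shows "L2_inner (\<lambda>t. F t - G t) H = L2_inner F H - L2_inner G H"
  unfolding L2_inner_def using assms by (simp add: left_diff_distrib integrable_L2_circ_mult_cnj)

lemma L2_inner_diff_right:
  assumes "F \<in> L2_circ" "G \<in> L2_circ" "H \<in> L2_circ"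
  shows "L2_inner H (\<lambda>t. F t - G t) = L2_inner H F - L2_inner H G"
  using L2_inner_diff_left[OF assms] by (metis L2_inner_commute complex_cnj_diff)

lemma fourier_coeff_diff:
  assumes "F \<in> L2_circ" "G \<in> L2_circ"
  shows "fourier_coeff (\<lambda>t. F t - G t) n = fourier_coeff F n - fourier_coeff G n"
  using assms by (simp add: fourier_coeff_eq_L2_inner L2_inner_diff_left diff_divide_distrib)

lemma fourier_coeff_sum:
  assumes "finite J" "\<And>j. j \<in> J \<Longrightarrow> H j \<in> L2_circ"
  shows "fourier_coeff (\<lambda>t. \<Sum>j\<in>J. b j * H j t) n = (\<Sum>j\<in>J. b j * fourier_coeff (H j) n)"
  using assms by (simp add: fourier_coeff_eq_L2_inner L2_inner_sum_left sum_divide_distrib)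

lemma fourier_coeff_fourier_basis: "fourier_coeff (fourier_basis j) n = (if j = n then 1 else 0)"
  by (simp add: fourier_coeff_eq_L2_inner L2_inner_fourier_basis)

lemma fourier_coeff_remove_head:
  assumes "F \<in> L2_circ" "finite J"
  shows "fourier_coeff (\<lambda>t. F t - (\<Sum>j\<in>J. fourier_coeff F j * fourier_basis j t)) n
       = (if n \<in> J then 0 else fourier_coeff F n)"
  using assms
  by (simp add: fourier_coeff_diff fourier_coeff_sum fourier_coeff_fourier_basis if_distrib
      cong: if_cong)

lemma L2_sqnorm_minus_fourier_sum:
  assumes F: "F \<in> L2_circ" and I: "finite I"
  shows "L2_sqnorm (\<lambda>t. F t - (\<Sum>n\<in>I. a n * fourier_basis n t)) =
    L2_sqnorm F - 2*pi*(\<Sum>n\<in>I. (cmod (fourier_coeff F n))\<^sup>2)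
      + 2*pi*(\<Sum>n\<in>I. (cmod (a n - fourier_coeff F n))\<^sup>2)"
proof -
  define S where "S t = (\<Sum>n\<in>I. a n * fourier_basis n t)" for t
  define c where "c n = fourier_coeff F n" for n
  have S: "S \<in> L2_circ" unfolding S_def[abs_def] by simp
  have FS: "L2_inner F (fourier_basis n) = 2*pi * c n" for n
    by (simp add: c_def fourier_coeff_eq_L2_inner)
  have SF: "L2_inner S F = (\<Sum>n\<in>I. a n * (2*pi * cnj (c n)))"
    unfolding S_def[abs_def] using I F
    by (simp add: L2_inner_sum_left FS L2_inner_commute[of "fourier_basis _" F])
  have SB: "L2_inner S (fourier_basis m) = (if m \<in> I then 2*pi * a m else 0)" for m
    unfolding S_def[abs_def] using I
    by (simp add: L2_inner_sum_left L2_inner_fourier_basis if_distrib sum.If_cases cong: if_cong)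
  have SS: "L2_inner S S = (\<Sum>n\<in>I. a n * (2*pi * cnj (a n)))"
    unfolding S_def[abs_def] using I
    by (simp add: L2_inner_sum_left L2_inner_commute[of "fourier_basis _"] SB[unfolded S_def[abs_def]])
  have "complex_of_real (L2_sqnorm (\<lambda>t. F t - S t)) = L2_inner (\<lambda>t. F t - S t) (\<lambda>t. F t - S t)"
    by (simp add: of_real_L2_sqnorm)
  also have "\<dots> = L2_inner F F - cnj (L2_inner S F) - L2_inner S F + L2_inner S S"
    using F S by (simp add: L2_inner_diff_left L2_inner_diff_right L2_inner_commute[of F S])
  also have "\<dots> = L2_inner F F - 2*pi*(\<Sum>n\<in>I. c n * cnj (c n))
      + 2*pi*(\<Sum>n\<in>I. (a n - c n) * cnj (a n - c n))"
    unfolding SF SS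
    by (simp add: sum_distrib_left ring_distribs sum_subtractf sum.distrib algebra_simps)
  also have "\<dots> = complex_of_real (L2_sqnorm F - 2*pi*(\<Sum>n\<in>I. (cmod (c n))\<^sup>2)
      + 2*pi*(\<Sum>n\<in>I. (cmod (a n - c n))\<^sup>2))"
    by (simp only: of_real_L2_sqnorm of_real_add of_real_diff of_real_mult of_real_sum
        complex_norm_square of_real_numeral)
  finally show ?thesis unfolding S_def c_def of_real_eq_iff .
qed

lemma bessel_inequality:
  assumes "F \<in> L2_circ" "finite I"
  shows "2*pi*(\<Sum>n\<in>I. (cmod (fourier_coeff F n))\<^sup>2) \<le> L2_sqnorm F"
  using L2_sqnorm_minus_fourier_sum[OF assms, of "fourier_coeff F"]
    L2_sqnorm_nonneg[of "\<lambda>t. F t - (\<Sum>n\<in>I. fourier_coeff F n * fourier_basis n t)"]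
  by simp

lemma fourier_sum_best_approx:
  assumes "F \<in> L2_circ" "finite I"
  shows "L2_sqnorm (\<lambda>t. F t - (\<Sum>n\<in>I. fourier_coeff F n * fourier_basis n t))
       \<le> L2_sqnorm (\<lambda>t. F t - (\<Sum>n\<in>I. a n * fourier_basis n t))"
  using L2_sqnorm_minus_fourier_sum[OF assms, of "fourier_coeff F"]
    L2_sqnorm_minus_fourier_sum[OF assms, of a]
  by (simp add: sum_nonneg)

lemma norm_fourier_coeff_square_le:
  "F \<in> L2_circ \<Longrightarrow> (cmod (fourier_coeff F n))\<^sup>2 \<le> L2_sqnorm F / (2*pi)"
  using bessel_inequality[of F "{n}"] by (simp add: field_simps)

lemma L2_sqnorm_cong_AE:
  assumes "AE t in circ. cmod (F t) = cmod (G t)"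
    and "F \<in> borel_measurable circ" "G \<in> borel_measurable circ"
  shows "L2_sqnorm F = L2_sqnorm G"
  unfolding L2_sqnorm_def by (rule integral_cong_AE) (use assms in auto)

lemma L2_sqnorm_cong:
  "(\<And>t. t \<in> {0..2*pi} \<Longrightarrow> F t = G t) \<Longrightarrow> L2_sqnorm F = L2_sqnorm G"
  unfolding L2_sqnorm_def by (rule Bochner_Integration.integral_cong) auto

lemma L2_sqnorm_cmult: "L2_sqnorm (\<lambda>t. c * G t) = (cmod c)\<^sup>2 * L2_sqnorm G"
  by (simp add: L2_sqnorm_def norm_mult power_mult_distrib)

lemma L2_sqnorm_diff_le:
  assumes "F \<in> L2_circ" "G \<in> L2_circ" "H \<in> L2_circ"
  shows "L2_sqnorm (\<lambda>t. F t - H t) \<le> 2 * L2_sqnorm (\<lambda>t. F t - G t) + 2 * L2_sqnorm (\<lambda>t. G t - H t)"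
proof -
  have "L2_sqnorm (\<lambda>t. F t - H t)
      \<le> integral\<^sup>L circ (\<lambda>t. 2 * ((cmod (F t - G t))\<^sup>2 + (cmod (G t - H t))\<^sup>2))"
    unfolding L2_sqnorm_def
  proof (rule integral_mono)
    show "(cmod (F t - H t))\<^sup>2 \<le> 2 * ((cmod (F t - G t))\<^sup>2 + (cmod (G t - H t))\<^sup>2)" for t
      using norm_add_square_le[of "F t - G t" "G t - H t"] by simp
  qed (use assms in \<open>simp_all add: L2_circ_integrable_square\<close>)
  also have "\<dots> = 2 * L2_sqnorm (\<lambda>t. F t - G t) + 2 * L2_sqnorm (\<lambda>t. G t - H t)"
    using assms by (simp add: L2_sqnorm_def L2_circ_integrable_square)
  finally show ?thesis .
qed

lemma L2_sqnorm_sum_le: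
  assumes "finite I" "\<And>i. i \<in> I \<Longrightarrow> F i \<in> L2_circ"
  shows "L2_sqnorm (\<lambda>t. \<Sum>i\<in>I. F i t) \<le> real (card I) * (\<Sum>i\<in>I. L2_sqnorm (F i))"
proof -
  have "L2_sqnorm (\<lambda>t. \<Sum>i\<in>I. F i t)
      \<le> integral\<^sup>L circ (\<lambda>t. real (card I) * (\<Sum>i\<in>I. (cmod (F i t))\<^sup>2))"
    unfolding L2_sqnorm_def
  proof (rule integral_mono)
    show "(cmod (\<Sum>i\<in>I. F i t))\<^sup>2 \<le> real (card I) * (\<Sum>i\<in>I. (cmod (F i t))\<^sup>2)" for t
    proof -
      have "(cmod (\<Sum>i\<in>I. F i t))\<^sup>2 \<le> (\<Sum>i\<in>I. 1 * cmod (F i t))\<^sup>2"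
        by (simp add: power_mono norm_sum)
      also have "\<dots> \<le> (\<Sum>i\<in>I. 1\<^sup>2) * (\<Sum>i\<in>I. (cmod (F i t))\<^sup>2)"
        by (rule Cauchy_Schwarz_ineq_sum)
      finally show ?thesis by simp
    qed
  qed (use assms in \<open>simp_all add: L2_circ_integrable_square\<close>)
  also have "\<dots> = real (card I) * (\<Sum>i\<in>I. L2_sqnorm (F i))"
    using assms by (simp add: L2_sqnorm_def L2_circ_integrable_square)
  finally show ?thesis .
qed

lemma L2_sqnorm_le_bound:
  assumes "F \<in> borel_measurable circ" "\<And>t. t \<in> {0..2*pi} \<Longrightarrow> cmod (F t) \<le> B"
  shows "L2_sqnorm F \<le> 2*pi*B\<^sup>2"
proof -
  have "L2_sqnorm F \<le> integral\<^sup>L circ (\<lambda>t. B\<^sup>2)"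
    unfolding L2_sqnorm_def
  proof (rule integral_mono)
    have "F \<in> L2_circ"
      by (rule L2_circ_bounded[OF assms(1) AE_I2]) (use assms(2) in auto)
    then show "integrable circ (\<lambda>t. (cmod (F t))\<^sup>2)"
      by (rule L2_circ_integrable_square)
    show "(cmod (F t))\<^sup>2 \<le> B\<^sup>2" if "t \<in> space circ" for t
      using assms(2)[of t] that by (simp add: power_mono)
  qed simp
  then show ?thesis by (simp add: measure_circ)
qed

lemma L2_sqnorm_dominated_convergence:
  assumes "F \<in> borel_measurable circ" "\<And>i. G i \<in> borel_measurable circ"
    and "\<And>t. t \<in> {0..2*pi} \<Longrightarrow> (\<lambda>i. G i t) \<longlonglongrightarrow> F t"
    and "integrable circ w" "\<And>i t. t \<in> {0..2*pi} \<Longrightarrow> (cmod (F t - G i t))\<^sup>2 \<le> w t"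
  shows "(\<lambda>i. L2_sqnorm (\<lambda>t. F t - G i t)) \<longlonglongrightarrow> 0"
proof -
  have "(\<lambda>i. integral\<^sup>L circ (\<lambda>t. (cmod (F t - G i t))\<^sup>2)) \<longlonglongrightarrow> integral\<^sup>L circ (\<lambda>t. 0)"
  proof (rule integral_dominated_convergence[OF _ _ assms(4)])
    show "(\<lambda>t. (cmod (F t - G i t))\<^sup>2) \<in> borel_measurable circ" for i
      using assms(1,2) by measurable
    show "AE t in circ. (\<lambda>i. (cmod (F t - G i t))\<^sup>2) \<longlonglongrightarrow> 0"
    proof (rule AE_I2)
      fix t assume "t \<in> space circ"
      then have "(\<lambda>i. (cmod (F t - G i t))\<^sup>2) \<longlonglongrightarrow> (cmod (F t - F t))\<^sup>2"
        using assms(3) by (intro tendsto_intros) auto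
      then show "(\<lambda>i. (cmod (F t - G i t))\<^sup>2) \<longlonglongrightarrow> 0" by simp
    qed
    show "AE t in circ. norm ((cmod (F t - G i t))\<^sup>2) \<le> w t" for i
      using assms(5) by (intro AE_I2) simp
  qed simp
  then show ?thesis by (simp add: L2_sqnorm_def)
qed

section \<open>Density of trigonometric polynomials\<close>

inductive trig_poly :: "(real \<Rightarrow> complex) \<Rightarrow> bool" where
  trig_poly_0: "trig_poly (\<lambda>t. 0)"
| trig_poly_add_basis: "trig_poly F \<Longrightarrow> trig_poly (\<lambda>t. F t + c * fourier_basis n t)"

lemma trig_poly_add:
  assumes "trig_poly F" "trig_poly G"
  shows "trig_poly (\<lambda>t. F t + G t)"
  using assms(2)
proof (induction G rule: trig_poly.induct)
  case trig_poly_0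
  then show ?case using assms(1) by simp
next
  case (trig_poly_add_basis G c n)
  then show ?case
    using trig_poly.trig_poly_add_basis[of "\<lambda>t. F t + G t" c n] by (simp add: add.assoc)
qed

lemma trig_poly_cmult: "trig_poly F \<Longrightarrow> trig_poly (\<lambda>t. c * F t)"
proof (induction F rule: trig_poly.induct)
  case (trig_poly_add_basis F d n)
  then show ?case
    using trig_poly.trig_poly_add_basis[of "\<lambda>t. c * F t" "c * d" n]
    by (simp add: ring_distribs mult.assoc)
qed (simp add: trig_poly.trig_poly_0)

lemma trig_poly_mult_basis: "trig_poly F \<Longrightarrow> trig_poly (\<lambda>t. F t * fourier_basis m t)"
proof (induction F rule: trig_poly.induct)
  case (trig_poly_add_basis F d n)
  have "(\<lambda>t. (F t + d * fourier_basis n t) * fourier_basis m t)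
      = (\<lambda>t. F t * fourier_basis m t + d * fourier_basis (n + m) t)"
    by (auto simp: fun_eq_iff ring_distribs mult.assoc fourier_basis_mult)
  then show ?case using trig_poly.trig_poly_add_basis[OF trig_poly_add_basis.IH] by simp
qed (simp add: trig_poly.trig_poly_0)

lemma trig_poly_mult:
  assumes "trig_poly F" "trig_poly G"
  shows "trig_poly (\<lambda>t. F t * G t)"
  using assms(2)
proof (induction G rule: trig_poly.induct)
  case (trig_poly_add_basis G c n)
  have "(\<lambda>t. F t * (G t + c * fourier_basis n t)) = (\<lambda>t. F t * G t + c * (F t * fourier_basis n t))"
    by (auto simp: fun_eq_iff ring_distribs)
  then show ?case
    using trig_poly_add[OF trig_poly_add_basis.IH trig_poly_cmult[OF trig_poly_mult_basis[OF assms(1)]]]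
    by simp
qed (simp add: trig_poly.trig_poly_0)

lemma trig_poly_cnj: "trig_poly F \<Longrightarrow> trig_poly (\<lambda>t. cnj (F t))"
proof (induction F rule: trig_poly.induct)
  case (trig_poly_add_basis F c n)
  then show ?case
    using trig_poly.trig_poly_add_basis[OF trig_poly_add_basis.IH, of "cnj c" "-n"]
    by (simp add: cnj_fourier_basis)
qed (simp add: trig_poly.trig_poly_0)

lemma trig_poly_Re: "trig_poly F \<Longrightarrow> trig_poly (\<lambda>t. complex_of_real (Re (F t)))"
  using trig_poly_cmult[OF trig_poly_add[OF _ trig_poly_cnj], of F F "1/2"]
  by (simp add: complex_add_cnj)

lemma trig_poly_basis: "trig_poly (\<lambda>t. c * fourier_basis n t)"
  using trig_poly_add_basis[OF trig_poly_0, of c n] by simp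

lemma trig_poly_const: "trig_poly (\<lambda>t. c)"
  using trig_poly_basis[of c 0] by (simp add: fourier_basis_def)

lemma trig_poly_sum: "(\<And>i. i \<in> I \<Longrightarrow> trig_poly (P i)) \<Longrightarrow> trig_poly (\<lambda>t. \<Sum>i\<in>I. P i t)"
  by (induction I rule: infinite_finite_induct) (simp_all add: trig_poly_0 trig_poly_add)

lemma trig_poly_fourier_sum:
  "trig_poly F \<Longrightarrow> \<exists>I a. finite I \<and> F = (\<lambda>t. \<Sum>n\<in>I. a n * fourier_basis n t)"
proof (induction F rule: trig_poly.induct)
  case trig_poly_0
  then show ?case by (intro exI[of _ "{}"]) auto
next
  case (trig_poly_add_basis F c n)
  then obtain I a where I: "finite I" and F: "F = (\<lambda>t. \<Sum>n\<in>I. a n * fourier_basis n t)"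
    by blast
  define a' where "a' = a(n := (if n \<in> I then a n else 0) + c)"
  have "F t + c * fourier_basis n t = (\<Sum>m\<in>insert n I. a' m * fourier_basis m t)" for t
  proof -
    have rest: "(\<Sum>m\<in>I - {n}. a' m * fourier_basis m t) = (\<Sum>m\<in>I - {n}. a m * fourier_basis m t)"
      by (rule sum.cong) (auto simp: a'_def)
    show ?thesis
      using I rest by (cases "n \<in> I") (simp_all add: F sum.remove a'_def ring_distribs insert_absorb)
  qed
  then show ?case using I by blast
qed

lemma trig_poly_continuous: "trig_poly F \<Longrightarrow> continuous_on S F"
  by (induction F rule: trig_poly.induct) (auto intro!: continuous_intros continuous_on_fourier_basis)

lemma trig_poly_L2_circ: "trig_poly F \<Longrightarrow> F \<in> L2_circ"
  by (rule L2_circ_continuous[OF trig_poly_continuous])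

lemma trig_poly_Re_mult:
  assumes "trig_poly P1" "trig_poly P2"
  shows "\<exists>P. trig_poly P \<and> (\<forall>t. Re (P t) = Re (P1 t) * Re (P2 t))"
proof -
  have "trig_poly (\<lambda>t. (1/2) * (P1 t * P2 t + P1 t * cnj (P2 t)))"
    by (intro trig_poly_cmult trig_poly_add trig_poly_mult trig_poly_cnj assms)
  moreover have "Re ((1/2) * (P1 t * P2 t + P1 t * cnj (P2 t))) = Re (P1 t) * Re (P2 t)" for t
    by simp
  ultimately show ?thesis by blast
qed

text \<open>Functions on the circle are read as functions of \<open>cis t\<close>, so that the real parts of
  trigonometric polynomials form a point-separating algebra on the compact \<open>sphere 0 1\<close>.\<close>

lemma trig_poly_uniform_approx:
  fixes f :: "complex \<Rightarrow> real"
  assumes f: "continuous_on (sphere 0 1) f" and "0 < \<epsilon>"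
  shows "\<exists>P. trig_poly P \<and> (\<forall>t. \<bar>f (cis t) - Re (P t)\<bar> < \<epsilon>)"
proof -
  define R where "R g \<longleftrightarrow> continuous_on (sphere (0::complex) 1) g \<and>
      (\<exists>P. trig_poly P \<and> (\<forall>t. g (cis t) = Re (P t)))" for g
  have "\<exists>g. R g \<and> (\<forall>x\<in>sphere 0 1. \<bar>f x - g x\<bar> < \<epsilon>)"
  proof (rule Stone_Weierstrass_HOL[OF compact_sphere _ _ _ _ _ f \<open>0 < \<epsilon>\<close>])
    show "R (\<lambda>x. c)" for c
      unfolding R_def using trig_poly_const[of "complex_of_real c"]
      by (auto intro!: exI[of _ "\<lambda>t. complex_of_real c"])
    show "continuous_on (sphere 0 1) g" if "R g" for g
      using that by (simp add: R_def)
    show "R (\<lambda>x. g x + h x)" if "R g \<and> R h" for g h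
    proof -
      from that obtain P1 P2 where "trig_poly P1" "trig_poly P2"
        "\<forall>t. g (cis t) = Re (P1 t)" "\<forall>t. h (cis t) = Re (P2 t)"
        "continuous_on (sphere 0 1) g" "continuous_on (sphere 0 1) h"
        unfolding R_def by blast
      then show ?thesis
        unfolding R_def
        by (auto intro!: continuous_on_add exI[of _ "\<lambda>t. P1 t + P2 t"] trig_poly_add)
    qed
    show "R (\<lambda>x. g x * h x)" if "R g \<and> R h" for g h
    proof -
      from that obtain P1 P2 where P: "trig_poly P1" "trig_poly P2"
        "\<forall>t. g (cis t) = Re (P1 t)" "\<forall>t. h (cis t) = Re (P2 t)"
        and "continuous_on (sphere 0 1) g" "continuous_on (sphere 0 1) h"
        unfolding R_def by blast
      moreover obtain P where "trig_poly P" "\<forall>t. Re (P t) = Re (P1 t) * Re (P2 t)"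
        using trig_poly_Re_mult[OF P(1,2)] by blast
      ultimately show ?thesis
        unfolding R_def by (auto intro!: continuous_on_mult exI[of _ P])
    qed
    have "R Re"
      unfolding R_def using trig_poly_basis[of 1 1]
      by (auto intro!: continuous_intros exI[of _ "\<lambda>t. 1 * fourier_basis 1 t"] simp: fourier_basis_def)
    moreover have "R Im"
      unfolding R_def using trig_poly_basis[of "-\<i>" 1]
      by (auto intro!: continuous_intros exI[of _ "\<lambda>t. -\<i> * fourier_basis 1 t"] simp: fourier_basis_def)
    ultimately show "\<exists>g. R g \<and> g x \<noteq> g y" if "x \<in> sphere 0 1 \<and> y \<in> sphere 0 1 \<and> x \<noteq> y" for x y
      using that complex_eqI by blast
  qed
  then obtain g P where P: "trig_poly P" "\<forall>t. g (cis t) = Re (P t)"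
    and approx: "\<forall>x\<in>sphere 0 1. \<bar>f x - g x\<bar> < \<epsilon>"
    unfolding R_def by blast
  have "\<bar>f (cis t) - Re (P t)\<bar> < \<epsilon>" for t
    using approx[rule_format, of "cis t"] P(2) by simp
  then show ?thesis using P(1) by blast
qed

lemma tendsto_min_infdist_indicator:
  assumes "closed C" "C \<noteq> {}"
  shows "(\<lambda>m. min 1 (real m * infdist z C)) \<longlonglongrightarrow> indicator (- C) z"
proof (cases "z \<in> C")
  case False
  then have d: "0 < infdist z C"
    using assms infdist_pos_not_in_closed by blast
  obtain N :: nat where N: "1 / infdist z C \<le> real N"
    using real_arch_simple by blast
  have "min 1 (real m * infdist z C) = 1" if "N \<le> m" for m
  proof -
    have "1 / infdist z C \<le> real m" using N that by linarith
    then show ?thesis using d by (simp add: field_simps)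
  qed
  then have "\<forall>\<^sub>F m in sequentially. min 1 (real m * infdist z C) = 1"
    by (auto simp: eventually_sequentially)
  then show ?thesis using False by (simp add: tendsto_eventually)
qed simp

lemma cis_eq_cis_imp_eq:
  assumes "t \<in> {0<..<2*pi}" "s \<in> {0..2*pi}" "cis t = cis s"
  shows "s = t"
proof -
  have t: "Arg2pi (cis t) = t"
    by (rule Arg2pi_unique[of 1]) (use assms(1) in \<open>auto simp: cis_conv_exp\<close>)
  show ?thesis
  proof (cases "s = 2*pi")
    case True
    then have "Arg2pi (cis s) = 0" using Arg2pi_of_real[of 1] by simp
    then show ?thesis using t assms by simp
  next
    case False
    then have "Arg2pi (cis s) = s"
      by (intro Arg2pi_unique[of 1]) (use assms(2) in \<open>auto simp: cis_conv_exp\<close>)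
    then show ?thesis using t assms by simp
  qed
qed

lemma continuous_approx_indicator_open:
  assumes T: "open T" "T \<subseteq> {0<..<2*pi}" and "0 < \<epsilon>"
  shows "\<exists>\<phi> :: complex \<Rightarrow> real. continuous_on UNIV \<phi> \<and>
           L2_sqnorm (\<lambda>t. indicator T t - complex_of_real (\<phi> (cis t))) < \<epsilon>"
proof -
  define C where "C = cis ` ({0..2*pi} - T)"
  have "compact ({0..2*pi} - T)"
    using closed_Int_compact[OF closed_Compl[OF T(1)] compact_Icc] by (simp add: Diff_eq Int_commute)
  then have "closed C"
    unfolding C_def by (intro compact_imp_closed compact_continuous_image continuous_intros)
  moreover have "cis 0 \<in> C"
    using T(2) unfolding C_def by (intro imageI) auto
  ultimately have C: "closed C" "C \<noteq> {}" by auto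
  \<comment> \<open>Urysohn-type functions of \<open>cis t\<close>: being continuous on the circle, they can later be
    approximated uniformly by trigonometric polynomials.\<close>
  define \<phi> where "\<phi> m z = min 1 (real m * infdist z C)" for m :: nat and z
  have \<phi>_cont: "continuous_on UNIV (\<phi> m)" for m
    unfolding \<phi>_def by (intro continuous_intros)
  have \<phi>_cis: "(\<lambda>t. complex_of_real (\<phi> m (cis t))) \<in> borel_measurable circ" for m
    by (rule borel_measurable_circI)
      (intro continuous_on_compose2[OF \<phi>_cont] continuous_intros, auto)
  have "indicator (- C) (cis t) = (indicator T t :: real)" if "t \<in> {0..2*pi}" for t
    using that T(2) cis_eq_cis_imp_eq[of t] by (auto simp: C_def indicator_def)
  then have lim: "(\<lambda>m. complex_of_real (\<phi> m (cis t))) \<longlonglongrightarrow> indicator T t" if "t \<in> {0..2*pi}" for t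
    using tendsto_of_real[OF tendsto_min_infdist_indicator[OF C, of "cis t"]] that
    by (cases "t \<in> T") (simp_all add: \<phi>_def)
  have bound: "(cmod (indicator T t - complex_of_real (\<phi> m (cis t))))\<^sup>2 \<le> 1" for m t
  proof -
    have "indicator T t - complex_of_real (\<phi> m (cis t)) = complex_of_real (indicator T t - \<phi> m (cis t))"
      by (simp add: indicator_def)
    moreover have "\<bar>indicator T t - \<phi> m (cis t)\<bar> \<le> 1"
      by (auto simp: indicator_def \<phi>_def infdist_nonneg)
    ultimately show ?thesis
      by (simp only: norm_of_real abs_square_le_1)
  qed
  have "T \<in> sets circ"
    using T by (auto simp: sets_circ)
  then have "(\<lambda>m. L2_sqnorm (\<lambda>t. indicator T t - complex_of_real (\<phi> m (cis t)))) \<longlonglongrightarrow> 0"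
    using \<phi>_cis lim bound by (intro L2_sqnorm_dominated_convergence[where w="\<lambda>_. 1"]) auto
  from order_tendstoD(2)[OF this \<open>0 < \<epsilon>\<close>] obtain m
    where "L2_sqnorm (\<lambda>t. indicator T t - complex_of_real (\<phi> m (cis t))) < \<epsilon>"
    by (auto simp: eventually_sequentially)
  then show ?thesis using \<phi>_cont by blast
qed

lemma trig_poly_approx_indicator_open:
  assumes "open T" "T \<subseteq> {0<..<2*pi}" and "0 < \<epsilon>"
  shows "\<exists>P. trig_poly P \<and> L2_sqnorm (\<lambda>t. indicator T t - P t) < \<epsilon>"
proof -
  obtain \<phi> where \<phi>: "continuous_on UNIV \<phi>"
    "L2_sqnorm (\<lambda>t. indicator T t - complex_of_real (\<phi> (cis t))) < \<epsilon>/4"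
    using continuous_approx_indicator_open[OF assms(1,2), of "\<epsilon>/4"] \<open>0 < \<epsilon>\<close> by auto
  define \<eta> where "\<eta> = sqrt (\<epsilon> / (8*pi))"
  obtain P where P: "trig_poly P" "\<And>t. \<bar>\<phi> (cis t) - Re (P t)\<bar> < \<eta>"
    using trig_poly_uniform_approx[OF continuous_on_subset[OF \<phi>(1)], of \<eta>] \<open>0 < \<epsilon>\<close>
    by (auto simp: \<eta>_def)
  define Q where "Q t = complex_of_real (Re (P t))" for t
  have Q: "trig_poly Q"
    unfolding Q_def[abs_def] by (rule trig_poly_Re[OF P(1)])
  have \<phi>_cis: "continuous_on {0..2*pi} (\<lambda>t. complex_of_real (\<phi> (cis t)))"
    by (intro continuous_on_compose2[OF \<phi>(1)] continuous_intros) auto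
  have "L2_sqnorm (\<lambda>t. complex_of_real (\<phi> (cis t)) - Q t) \<le> 2*pi*\<eta>\<^sup>2"
  proof (rule L2_sqnorm_le_bound)
    show "(\<lambda>t. complex_of_real (\<phi> (cis t)) - Q t) \<in> borel_measurable circ"
      using trig_poly_continuous[OF Q] \<phi>_cis
      by (intro borel_measurable_circI continuous_on_diff) auto
    show "cmod (complex_of_real (\<phi> (cis t)) - Q t) \<le> \<eta>" for t
      using P(2)[of t] by (simp add: Q_def flip: of_real_diff)
  qed
  also have "2*pi*\<eta>\<^sup>2 = \<epsilon>/4"
    using \<open>0 < \<epsilon>\<close> by (simp add: \<eta>_def)
  finally have "L2_sqnorm (\<lambda>t. complex_of_real (\<phi> (cis t)) - Q t) \<le> \<epsilon>/4" .
  moreover have "L2_sqnorm (\<lambda>t. indicator T t - Q t) \<le> 2 * L2_sqnorm (\<lambda>t. indicator T t -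
      complex_of_real (\<phi> (cis t))) + 2 * L2_sqnorm (\<lambda>t. complex_of_real (\<phi> (cis t)) - Q t)"
    using assms(1,2)
    by (intro L2_sqnorm_diff_le L2_circ_indicator L2_circ_continuous[OF \<phi>_cis] trig_poly_L2_circ[OF Q])
      (auto simp: sets_circ)
  ultimately have "L2_sqnorm (\<lambda>t. indicator T t - Q t) < \<epsilon>"
    using \<phi>(2) by linarith
  then show ?thesis using Q by blast
qed

lemma L2_sqnorm_indicator_diff:
  assumes "A \<in> sets circ" "B \<in> sets circ"
  shows "L2_sqnorm (\<lambda>t. indicator A t - indicator B t) = measure circ ((A - B) \<union> (B - A))"
proof -
  have "(cmod (indicator A t - indicator B t :: complex))\<^sup>2 = indicator ((A - B) \<union> (B - A)) t" for t
    by (simp add: indicator_def)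
  moreover have "(A - B) \<union> (B - A) \<subseteq> space circ"
    using assms by (auto simp: sets_circ)
  ultimately show ?thesis
    using assms by (simp add: L2_sqnorm_def Int_absorb2)
qed

lemma L2_sqnorm_indicator_diff_open_le:
  assumes A: "A \<in> sets circ" and T: "A \<subseteq> T" "T - A \<in> lmeasurable" "open T"
  shows "L2_sqnorm (\<lambda>t. indicator A t - indicator (T \<inter> {0<..<2*pi}) t) \<le> measure lebesgue (T - A)"
proof -
  define T' where "T' = T \<inter> {0<..<2*pi}"
  have T': "T' \<in> sets circ"
    using T(3) by (auto simp: T'_def sets_circ)
  have TA: "(T - A) \<inter> {0..2*pi} \<in> sets circ"
    using T(2) by (auto simp: sets_circ)
  have Z: "{0, 2*pi} \<in> sets circ"
    by (simp add: sets_circ)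
  have sub: "(A - T') \<union> (T' - A) \<subseteq> ((T - A) \<inter> {0..2*pi}) \<union> {0, 2*pi}"
    using A T(1) by (auto simp: T'_def sets_circ)
  have "L2_sqnorm (\<lambda>t. indicator A t - indicator T' t) = measure circ ((A - T') \<union> (T' - A))"
    by (rule L2_sqnorm_indicator_diff[OF A T'])
  also have "\<dots> \<le> measure circ (((T - A) \<inter> {0..2*pi}) \<union> {0, 2*pi})"
    by (rule circ.finite_measure_mono[OF sub sets.Un[OF TA Z]])
  also have "\<dots> \<le> measure circ ((T - A) \<inter> {0..2*pi}) + measure circ {0, 2*pi}"
    by (rule measure_subadditive[OF TA Z]) (simp_all add: circ.emeasure_finite)
  also have "measure circ {0, 2*pi} = 0"
    using negligible_imp_measure0[OF negligible_finite[of "{0, 2*pi}"]] by (simp add: measure_circ)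
  also have "measure circ ((T - A) \<inter> {0..2*pi}) \<le> measure lebesgue (T - A)"
    using T(2) by (subst measure_circ) (auto intro!: measure_mono_fmeasurable)
  finally show ?thesis by (simp add: T'_def)
qed

lemma trig_poly_approx_indicator:
  assumes A: "A \<in> sets circ" and "0 < \<epsilon>"
  shows "\<exists>P. trig_poly P \<and> L2_sqnorm (\<lambda>t. indicator A t - P t) < \<epsilon>"
proof -
  obtain T where T: "open T" "A \<subseteq> T" "T - A \<in> lmeasurable"
    "emeasure lebesgue (T - A) < ennreal (\<epsilon>/4)"
    using sets_lebesgue_outer_open[of A "\<epsilon>/4"] A \<open>0 < \<epsilon>\<close> by (auto simp: sets_circ)
  define T' where "T' = T \<inter> {0<..<2*pi}"
  have T': "open T'" "T' \<subseteq> {0<..<2*pi}" "T' \<in> sets circ"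
    using T(1) by (auto simp: T'_def sets_circ)
  obtain P where P: "trig_poly P" "L2_sqnorm (\<lambda>t. indicator T' t - P t) < \<epsilon>/4"
    using trig_poly_approx_indicator_open[OF T'(1,2), of "\<epsilon>/4"] \<open>0 < \<epsilon>\<close> by auto
  have "L2_sqnorm (\<lambda>t. indicator A t - indicator T' t) \<le> measure lebesgue (T - A)"
    unfolding T'_def by (rule L2_sqnorm_indicator_diff_open_le[OF A T(2,3,1)])
  also have "\<dots> < \<epsilon>/4"
    using T(3,4) \<open>0 < \<epsilon>\<close> by (simp add: emeasure_eq_measure2 ennreal_less_iff)
  finally have "L2_sqnorm (\<lambda>t. indicator A t - P t) < \<epsilon>"
    using L2_sqnorm_diff_le[OF L2_circ_indicator[OF A] L2_circ_indicator[OF T'(3)]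
        trig_poly_L2_circ[OF P(1)]] P(2)
    by linarith
  then show ?thesis using P(1) by blast
qed

lemma trig_poly_approx_simple_function:
  assumes s: "simple_function circ s" and "0 < \<epsilon>"
  shows "\<exists>P. trig_poly P \<and> L2_sqnorm (\<lambda>t. s t - P t) < \<epsilon>"
proof -
  define V where "V = s ` space circ"
  have V: "finite V" using simple_functionD(1)[OF s] by (simp add: V_def)
  define X where "X y = s -` {y} \<inter> space circ" for y
  have X: "X y \<in> sets circ" for y using simple_functionD(2)[OF s] by (simp add: X_def)
  define C where "C = real (card V) * (\<Sum>y\<in>V. (cmod y)\<^sup>2) + 1"
  have C: "1 \<le> C" by (simp add: C_def sum_nonneg)
  obtain Q where Q: "\<And>y. trig_poly (Q y)" "\<And>y. L2_sqnorm (\<lambda>t. indicator (X y) t - Q y t) < \<epsilon> / C"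
    using trig_poly_approx_indicator[OF X, of "\<epsilon> / C"] C \<open>0 < \<epsilon>\<close> by (metis divide_pos_pos less_le_trans zero_less_one)
  define P where "P t = (\<Sum>y\<in>V. y * Q y t)" for t
  have P: "trig_poly P"
    unfolding P_def[abs_def] by (intro trig_poly_sum trig_poly_cmult Q(1))
  have "s t = (\<Sum>y\<in>V. y * indicator (X y) t)" if "t \<in> space circ" for t
  proof -
    have "(\<Sum>y\<in>V. y * indicator (X y) t) = (\<Sum>y\<in>V. if y = s t then y else 0)"
      by (rule sum.cong) (use that in \<open>auto simp: X_def indicator_def\<close>)
    then show ?thesis using V that by (simp add: V_def)
  qed
  then have "L2_sqnorm (\<lambda>t. s t - P t) = L2_sqnorm (\<lambda>t. \<Sum>y\<in>V. y * (indicator (X y) t - Q y t))"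
    by (intro L2_sqnorm_cong) (simp add: P_def sum_subtractf ring_distribs)
  also have "\<dots> \<le> real (card V) * (\<Sum>y\<in>V. L2_sqnorm (\<lambda>t. y * (indicator (X y) t - Q y t)))"
    by (rule L2_sqnorm_sum_le[OF V]) (use L2_circ_indicator[OF X] trig_poly_L2_circ[OF Q(1)] in simp)
  also have "\<dots> = real (card V) * (\<Sum>y\<in>V. (cmod y)\<^sup>2 * L2_sqnorm (\<lambda>t. indicator (X y) t - Q y t))"
    by (simp only: L2_sqnorm_cmult)
  also have "\<dots> \<le> real (card V) * (\<Sum>y\<in>V. (cmod y)\<^sup>2 * (\<epsilon> / C))"
    by (intro mult_left_mono sum_mono) (use Q(2) less_imp_le in auto)
  also have "\<dots> = (C - 1) * (\<epsilon> / C)"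
    by (simp only: C_def sum_distrib_right[symmetric] mult.assoc add_diff_cancel_right')
  also have "\<dots> < \<epsilon>"
    using C \<open>0 < \<epsilon>\<close> by (simp add: field_simps)
  finally show ?thesis using P by blast
qed

lemma L2_circ_simple_function:
  assumes "simple_function circ s"
  shows "s \<in> L2_circ"
proof (rule L2_circ_bounded[where B="Max (cmod ` s ` space circ)"])
  show "s \<in> borel_measurable circ"
    using assms by (rule borel_measurable_simple_function)
  show "AE t in circ. cmod (s t) \<le> Max (cmod ` s ` space circ)"
    using simple_functionD(1)[OF assms] by (intro AE_I2 Max_ge) auto
qed

lemma trig_poly_dense_L2_circ:
  assumes F: "F \<in> L2_circ" and "0 < \<epsilon>"
  shows "\<exists>P. trig_poly P \<and> L2_sqnorm (\<lambda>t. F t - P t) < \<epsilon>"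
proof -
  obtain S where S: "\<And>i. simple_function circ (S i)"
    "\<And>t. t \<in> space circ \<Longrightarrow> (\<lambda>i. S i t) \<longlonglongrightarrow> F t"
    and S_dist: "\<And>i t. t \<in> space circ \<Longrightarrow> dist (S i t) 0 \<le> 2 * dist (F t) 0"
    using borel_measurable_implies_sequence_metric[OF L2_circ_measurable[OF F], of 0] by blast
  have bound: "(cmod (F t - S i t))\<^sup>2 \<le> 9 * (cmod (F t))\<^sup>2" if "t \<in> {0..2*pi}" for i t
  proof -
    have "cmod (F t - S i t) \<le> 3 * cmod (F t)"
      using norm_triangle_ineq4[of "F t" "S i t"] S_dist[of t i] that by simp
    from power_mono[OF this norm_ge_zero, of 2] show ?thesis
      by (simp add: power_mult_distrib)
  qed
  have "(\<lambda>i. L2_sqnorm (\<lambda>t. F t - S i t)) \<longlonglongrightarrow> 0"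
    using F S bound borel_measurable_simple_function[OF S(1)]
    by (intro L2_sqnorm_dominated_convergence[where w="\<lambda>t. 9 * (cmod (F t))\<^sup>2"])
      (auto simp: L2_circ_measurable L2_circ_integrable_square)
  from order_tendstoD(2)[OF this, of "\<epsilon>/4"] \<open>0 < \<epsilon>\<close>
  obtain i where i: "L2_sqnorm (\<lambda>t. F t - S i t) < \<epsilon>/4"
    by (auto simp: eventually_sequentially)
  obtain P where P: "trig_poly P" "L2_sqnorm (\<lambda>t. S i t - P t) < \<epsilon>/4"
    using trig_poly_approx_simple_function[OF S(1)[of i], of "\<epsilon>/4"] \<open>0 < \<epsilon>\<close> by auto
  have "L2_sqnorm (\<lambda>t. F t - P t) < \<epsilon>"
    using L2_sqnorm_diff_le[OF F L2_circ_simple_function[OF S(1)[of i]] trig_poly_L2_circ[OF P(1)]]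
      i P(2) by linarith
  then show ?thesis using P(1) by blast
qed

section \<open>Parseval's identity on \<open>H\<^sup>2\<close>\<close>

lemma fourier_sum_approx:
  assumes F: "F \<in> L2_circ" and "0 < \<epsilon>"
  shows "\<exists>I. finite I \<and> L2_sqnorm (\<lambda>t. F t - (\<Sum>n\<in>I. fourier_coeff F n * fourier_basis n t)) < \<epsilon>"
proof -
  obtain P where P: "trig_poly P" "L2_sqnorm (\<lambda>t. F t - P t) < \<epsilon>"
    using trig_poly_dense_L2_circ[OF assms] by blast
  obtain I a where I: "finite I" "P = (\<lambda>t. \<Sum>n\<in>I. a n * fourier_basis n t)"
    using trig_poly_fourier_sum[OF P(1)] by blast
  have "L2_sqnorm (\<lambda>t. F t - (\<Sum>n\<in>I. fourier_coeff F n * fourier_basis n t)) \<le> L2_sqnorm (\<lambda>t. F t - P t)"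
    unfolding I(2) by (rule fourier_sum_best_approx[OF F I(1)])
  then show ?thesis
    using P(2) I(1) by (intro exI[of _ I]) simp
qed

lemma sum_int_le_suminf_nat:
  fixes g :: "int \<Rightarrow> real"
  assumes "finite I" "\<And>n. 0 \<le> g n" "\<And>n. n < 0 \<Longrightarrow> g n = 0"
  shows "ennreal (\<Sum>n\<in>I. g n) \<le> (\<Sum>m. ennreal (g (int m)))"
proof -
  define B where "B = nat (Max (insert 0 I)) + 1"
  have "(\<Sum>n\<in>I. g n) = (\<Sum>n\<in>I \<inter> {0..}. g n)"
    using assms(1) by (intro sum.mono_neutral_right) (auto intro: assms(3) simp: not_le)
  also have "\<dots> \<le> (\<Sum>n\<in>int ` {..<B}. g n)"
  proof (rule sum_mono2)
    show "I \<inter> {0..} \<subseteq> int ` {..<B}"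
    proof
      fix n assume n: "n \<in> I \<inter> {0..}"
      then have "n \<le> Max (insert 0 I)" using assms(1) by simp
      then have "nat n < B" using nat_mono by (simp add: B_def le_imp_less_Suc)
      then show "n \<in> int ` {..<B}" using n by (auto intro: image_eqI[of _ _ "nat n"])
    qed
  qed (use assms(2) in auto)
  also have "\<dots> = (\<Sum>m<B. g (int m))"
    by (subst sum.reindex) auto
  finally have "ennreal (\<Sum>n\<in>I. g n) \<le> (\<Sum>m<B. ennreal (g (int m)))"
    using assms(2) by (simp add: ennreal_leI sum_ennreal)
  also have "\<dots> \<le> (\<Sum>m. ennreal (g (int m)))"
    by (rule sum_le_suminf) auto
  finally show ?thesis .
qed

lemma coeff_suminf_le_L2_sqnorm:
  assumes "F \<in> L2_circ"
  shows "(\<Sum>n. ennreal ((cmod (Pplus_coeffs F n))\<^sup>2)) \<le> ennreal (L2_sqnorm F / (2*pi))"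
proof (rule suminf_le_const[OF summableI])
  fix M
  have "2*pi*(\<Sum>n\<in>int ` {..<M}. (cmod (fourier_coeff F n))\<^sup>2) \<le> L2_sqnorm F"
    by (rule bessel_inequality[OF assms]) simp
  then show "(\<Sum>n<M. ennreal ((cmod (Pplus_coeffs F n))\<^sup>2)) \<le> ennreal (L2_sqnorm F / (2*pi))"
    by (simp add: sum.reindex Pplus_coeffs_def sum_ennreal field_simps ennreal_leI)
qed

lemma parseval_H2:
  assumes F: "F \<in> H2"
  shows "(\<Sum>n. ennreal ((cmod (Pplus_coeffs F n))\<^sup>2)) = ennreal (L2_sqnorm F / (2*pi))"
proof (rule antisym)
  have L2: "F \<in> L2_circ" using F by (simp add: H2_def)
  then show "(\<Sum>n. ennreal ((cmod (Pplus_coeffs F n))\<^sup>2)) \<le> ennreal (L2_sqnorm F / (2*pi))"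
    by (rule coeff_suminf_le_L2_sqnorm)
  show "ennreal (L2_sqnorm F / (2*pi)) \<le> (\<Sum>n. ennreal ((cmod (Pplus_coeffs F n))\<^sup>2))"
  proof (rule ennreal_le_epsilon)
    fix \<epsilon> :: real assume "0 < \<epsilon>"
    then obtain I where I: "finite I"
      "L2_sqnorm (\<lambda>t. F t - (\<Sum>n\<in>I. fourier_coeff F n * fourier_basis n t)) < 2*pi*\<epsilon>"
      using fourier_sum_approx[OF L2, of "2*pi*\<epsilon>"] by auto
    then have "L2_sqnorm F < 2*pi*((\<Sum>n\<in>I. (cmod (fourier_coeff F n))\<^sup>2) + \<epsilon>)"
      using L2_sqnorm_minus_fourier_sum[OF L2 I(1), of "fourier_coeff F"] by (simp add: algebra_simps)
    then have "ennreal (L2_sqnorm F / (2*pi)) \<le> ennreal ((\<Sum>n\<in>I. (cmod (fourier_coeff F n))\<^sup>2) + \<epsilon>)"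
      by (intro ennreal_leI) (simp add: pos_divide_le_eq mult.commute)
    also have "\<dots> = ennreal (\<Sum>n\<in>I. (cmod (fourier_coeff F n))\<^sup>2) + ennreal \<epsilon>"
      using \<open>0 < \<epsilon>\<close> by (intro ennreal_plus sum_nonneg) auto
    also have "\<dots> \<le> (\<Sum>n. ennreal ((cmod (Pplus_coeffs F n))\<^sup>2)) + ennreal \<epsilon>"
    proof (rule add_right_mono)
      show "ennreal (\<Sum>n\<in>I. (cmod (fourier_coeff F n))\<^sup>2) \<le> (\<Sum>n. ennreal ((cmod (Pplus_coeffs F n))\<^sup>2))"
        using F unfolding Pplus_coeffs_def by (intro sum_int_le_suminf_nat I(1)) (auto simp: H2_def)
    qed
    finally show "ennreal (L2_sqnorm F / (2*pi)) \<le> (\<Sum>n. ennreal ((cmod (Pplus_coeffs F n))\<^sup>2)) + ennreal \<epsilon>" .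
  qed
qed

section \<open>Multiplication by an inner function\<close>

lemma inner_funD:
  assumes "inner_fun \<theta>"
  shows "\<theta> \<in> borel_measurable circ" "AE t in circ. cmod (\<theta> t) = 1"
    "\<And>n. n < 0 \<Longrightarrow> fourier_coeff \<theta> n = 0"
  using assms by (auto simp: inner_fun_def Hinf_def)

lemma L2_circ_mult_unimodular:
  assumes "F \<in> L2_circ" "G \<in> borel_measurable circ" "AE t in circ. cmod (G t) = 1"
  shows "(\<lambda>t. G t * F t) \<in> L2_circ"
  using assms(3) by (intro L2_circ_mult_bounded[OF assms(1,2), of 1]) (auto elim: AE_mp)

lemma L2_sqnorm_mult_unimodular:
  assumes "F \<in> borel_measurable circ" "G \<in> borel_measurable circ" "AE t in circ. cmod (G t) = 1"
  shows "L2_sqnorm (\<lambda>t. G t * F t) = L2_sqnorm F"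
  using assms by (intro L2_sqnorm_cong_AE) (auto simp: norm_mult elim: AE_mp)

lemma fourier_coeff_cnj_mult_basis:
  "fourier_coeff (\<lambda>t. cnj (\<theta> t) * fourier_basis j t) n = cnj (fourier_coeff \<theta> (j - n))"
proof -
  have "(\<lambda>t. cnj (\<theta> t) * fourier_basis j t * cnj (fourier_basis n t))
      = (\<lambda>t. cnj (\<theta> t * cnj (fourier_basis (j - n) t)))"
    by (simp add: fun_eq_iff cnj_fourier_basis fourier_basis_mult mult.assoc)
  then have "L2_inner (\<lambda>t. cnj (\<theta> t) * fourier_basis j t) (fourier_basis n)
      = integral\<^sup>L circ (\<lambda>t. cnj (\<theta> t * cnj (fourier_basis (j - n) t)))"
    unfolding L2_inner_def by (simp only:)
  also have "\<dots> = cnj (L2_inner \<theta> (fourier_basis (j - n)))"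
    unfolding L2_inner_def by (rule Bochner_Integration.integral_cnj)
  finally show ?thesis by (simp add: fourier_coeff_eq_L2_inner)
qed

lemma fourier_coeff_basis_mult:
  "fourier_coeff (\<lambda>t. fourier_basis j t * \<theta> t) n = fourier_coeff \<theta> (n - j)"
proof -
  have "(\<lambda>t. fourier_basis j t * \<theta> t * cnj (fourier_basis n t))
      = (\<lambda>t. \<theta> t * cnj (fourier_basis (n - j) t))"
    by (auto simp: fun_eq_iff cnj_fourier_basis fourier_basis_mult mult.commute mult.left_commute)
  then show ?thesis by (simp add: fourier_coeff_eq_L2_inner L2_inner_def)
qed

lemma fourier_coeff_eq_0_of_approx:
  assumes F: "F \<in> L2_circ"
    and approx: "\<And>\<epsilon>. 0 < \<epsilon> \<Longrightarrow>
      \<exists>G \<in> L2_circ. L2_sqnorm (\<lambda>t. F t - G t) < \<epsilon> \<and> fourier_coeff G n = 0"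
  shows "fourier_coeff F n = 0"
proof -
  have "(cmod (fourier_coeff F n))\<^sup>2 \<le> 0 + \<delta>" if "0 < \<delta>" for \<delta>
  proof -
    obtain G where G: "G \<in> L2_circ" "L2_sqnorm (\<lambda>t. F t - G t) < 2*pi*\<delta>" "fourier_coeff G n = 0"
      using approx[of "2*pi*\<delta>"] \<open>0 < \<delta>\<close> by auto
    then have "fourier_coeff F n = fourier_coeff (\<lambda>t. F t - G t) n"
      using F by (simp add: fourier_coeff_diff)
    moreover have "(cmod (fourier_coeff (\<lambda>t. F t - G t) n))\<^sup>2 \<le> L2_sqnorm (\<lambda>t. F t - G t) / (2*pi)"
      using F G by (intro norm_fourier_coeff_square_le) simp
    moreover have "L2_sqnorm (\<lambda>t. F t - G t) / (2*pi) < \<delta>"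
      using G(2) by (simp add: pos_divide_less_eq algebra_simps)
    ultimately show ?thesis by simp
  qed
  then have "(cmod (fourier_coeff F n))\<^sup>2 \<le> 0"
    by (rule field_le_epsilon)
  then show ?thesis by simp
qed

lemma H2_mult_inner:
  assumes \<theta>: "inner_fun \<theta>" and g: "g \<in> H2"
  shows "(\<lambda>t. g t * \<theta> t) \<in> H2"
proof -
  note \<theta>D = inner_funD[OF \<theta>]
  have g_L2: "g \<in> L2_circ" and g_coeff: "\<And>n. n < 0 \<Longrightarrow> fourier_coeff g n = 0"
    using g by (auto simp: H2_def)
  have mult_L2: "(\<lambda>t. F t * \<theta> t) \<in> L2_circ" if "F \<in> L2_circ" for F
    using L2_circ_mult_unimodular[OF that \<theta>D(1,2)] by (simp add: mult.commute)
  have "fourier_coeff (\<lambda>t. g t * \<theta> t) n = 0" if "n < 0" for n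
  proof (rule fourier_coeff_eq_0_of_approx[OF mult_L2[OF g_L2]])
    fix \<epsilon> :: real assume "0 < \<epsilon>"
    then obtain I where I: "finite I"
      "L2_sqnorm (\<lambda>t. g t - (\<Sum>j\<in>I. fourier_coeff g j * fourier_basis j t)) < \<epsilon>"
      using fourier_sum_approx[OF g_L2] by blast
    define S where "S t = (\<Sum>j\<in>I. fourier_coeff g j * fourier_basis j t)" for t
    have S: "S \<in> L2_circ" unfolding S_def[abs_def] by simp
    have "L2_sqnorm (\<lambda>t. g t * \<theta> t - S t * \<theta> t) = L2_sqnorm (\<lambda>t. g t - S t)"
      using L2_sqnorm_mult_unimodular[OF L2_circ_measurable[OF L2_circ_diff[OF g_L2 S]] \<theta>D(1,2)]
      by (simp add: algebra_simps)
    moreover have "fourier_coeff (\<lambda>t. S t * \<theta> t) n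
        = (\<Sum>j\<in>I. fourier_coeff g j * fourier_coeff \<theta> (n - j))"
      using I(1) mult_L2[OF L2_circ_fourier_basis]
      by (simp add: S_def sum_distrib_right mult.assoc fourier_coeff_sum fourier_coeff_basis_mult)
    moreover have "\<dots> = 0"
    proof (rule sum.neutral, rule ballI)
      fix j assume "j \<in> I"
      show "fourier_coeff g j * fourier_coeff \<theta> (n - j) = 0"
        using g_coeff[of j] \<theta>D(3)[of "n - j"] \<open>n < 0\<close> by (cases "j < 0") auto
    qed
    ultimately show "\<exists>G\<in>L2_circ. L2_sqnorm (\<lambda>t. g t * \<theta> t - G t) < \<epsilon> \<and> fourier_coeff G n = 0"
      using I(2) mult_L2[OF S] by (intro bexI[of _ "\<lambda>t. S t * \<theta> t"]) (auto simp: S_def)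
  qed
  then show ?thesis using mult_L2[OF g_L2] by (simp add: H2_def)
qed

lemma fourier_coeff_cnj_inner_mult_remove:
  assumes \<theta>: "inner_fun \<theta>" and F: "F \<in> L2_circ" and J: "finite J" "\<And>j. j \<in> J \<Longrightarrow> j < n"
  shows "fourier_coeff (\<lambda>t. cnj (\<theta> t) * (F t - (\<Sum>j\<in>J. c j * fourier_basis j t))) n
       = fourier_coeff (\<lambda>t. cnj (\<theta> t) * F t) n"
proof -
  note \<theta>D = inner_funD[OF \<theta>]
  have cnj_\<theta>: "cnj \<circ> \<theta> \<in> borel_measurable circ" "AE t in circ. cmod ((cnj \<circ> \<theta>) t) = 1"
    using \<theta>D(1,2) by (auto simp: comp_def)
  have "fourier_coeff (\<lambda>t. cnj (\<theta> t) * (F t - (\<Sum>j\<in>J. c j * fourier_basis j t))) n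
      = fourier_coeff (\<lambda>t. cnj (\<theta> t) * F t) n
        - (\<Sum>j\<in>J. c j * fourier_coeff (\<lambda>t. cnj (\<theta> t) * fourier_basis j t) n)"
    using J(1) L2_circ_mult_unimodular[OF F cnj_\<theta>]
      L2_circ_mult_unimodular[OF L2_circ_fourier_basis cnj_\<theta>]
    by (simp add: right_diff_distrib sum_distrib_left mult.left_commute fourier_coeff_diff
        fourier_coeff_sum)
  also have "(\<Sum>j\<in>J. c j * fourier_coeff (\<lambda>t. cnj (\<theta> t) * fourier_basis j t) n) = 0"
    using J(2) \<theta>D(3) by (intro sum.neutral) (simp add: fourier_coeff_cnj_mult_basis)
  finally show ?thesis by simp
qed

definition coeff_tail :: "(nat \<Rightarrow> complex) \<Rightarrow> nat \<Rightarrow> ennreal" where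
  "coeff_tail a k = (\<Sum>n. ennreal (if k \<le> n then (cmod (a n))\<^sup>2 else 0))"

lemma toeplitz_tail_le:
  assumes \<theta>: "inner_fun \<theta>" and f: "f \<in> H2"
  shows "coeff_tail (toeplitz_conj_coeffs \<theta> f) k \<le> coeff_tail (Pplus_coeffs f) k"
proof -
  note \<theta>D = inner_funD[OF \<theta>]
  have f_L2: "f \<in> L2_circ" and f_coeff: "\<And>n. n < 0 \<Longrightarrow> fourier_coeff f n = 0"
    using f by (auto simp: H2_def)
  define h where "h t = f t - (\<Sum>j\<in>{0..<int k}. fourier_coeff f j * fourier_basis j t)" for t
  have h_L2: "h \<in> L2_circ"
    unfolding h_def[abs_def] using f_L2 by simp
  have h_coeff: "fourier_coeff h n = (if int k \<le> n then fourier_coeff f n else 0)" for n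
    unfolding h_def[abs_def] using f_coeff[of n] by (simp add: fourier_coeff_remove_head[OF f_L2])
  then have h: "h \<in> H2"
    using h_L2 by (simp add: H2_def)
  have Th: "toeplitz_conj_coeffs \<theta> f n = fourier_coeff (\<lambda>t. cnj (\<theta> t) * h t) (int n)"
    if "k \<le> n" for n
    using that fourier_coeff_cnj_inner_mult_remove[OF \<theta> f_L2, of "{0..<int k}" "int n"]
    by (simp add: h_def toeplitz_conj_coeffs_def Pplus_coeffs_def)
  have "coeff_tail (toeplitz_conj_coeffs \<theta> f) k
      \<le> (\<Sum>n. ennreal ((cmod (Pplus_coeffs (\<lambda>t. cnj (\<theta> t) * h t) n))\<^sup>2))"
    unfolding coeff_tail_def by (intro suminf_le summableI) (simp add: Th Pplus_coeffs_def)
  also have "\<dots> \<le> ennreal (L2_sqnorm (\<lambda>t. cnj (\<theta> t) * h t) / (2*pi))"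
    by (rule coeff_suminf_le_L2_sqnorm) (use L2_circ_mult_unimodular[OF h_L2] \<theta>D(1,2) in auto)
  also have "L2_sqnorm (\<lambda>t. cnj (\<theta> t) * h t) = L2_sqnorm h"
    using \<theta>D(1,2) L2_circ_measurable[OF h_L2] by (intro L2_sqnorm_mult_unimodular) auto
  also have "ennreal (L2_sqnorm h / (2*pi)) = (\<Sum>n. ennreal ((cmod (Pplus_coeffs h n))\<^sup>2))"
    by (rule parseval_H2[OF h, symmetric])
  also have "\<dots> = coeff_tail (Pplus_coeffs f) k"
    unfolding coeff_tail_def Pplus_coeffs_def h_coeff
    by (rule arg_cong[where f=suminf]) (auto simp: fun_eq_iff)
  finally show ?thesis .
qed

lemma toeplitz_conj_mult_inner:
  assumes \<theta>: "inner_fun \<theta>" and g: "g \<in> borel_measurable circ"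
  shows "toeplitz_conj_coeffs \<theta> (\<lambda>t. g t * \<theta> t) = Pplus_coeffs g"
proof
  fix n
  have cis_meas: "(\<lambda>t. cis (- (of_int (int n) * t))) \<in> borel_measurable circ"
    by (rule borel_measurable_circI) (intro continuous_intros)
  have "integral\<^sup>L circ (\<lambda>t. cnj (\<theta> t) * (g t * \<theta> t) * cis (- (of_int (int n) * t)))
      = integral\<^sup>L circ (\<lambda>t. g t * cis (- (of_int (int n) * t)))"
  proof (rule integral_cong_AE)
    show "(\<lambda>t. cnj (\<theta> t) * (g t * \<theta> t) * cis (- (of_int (int n) * t))) \<in> borel_measurable circ"
      using g inner_funD(1)[OF \<theta>] cis_meas by measurable
    show "(\<lambda>t. g t * cis (- (of_int (int n) * t))) \<in> borel_measurable circ"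
      using g cis_meas by measurable
    show "AE t in circ. cnj (\<theta> t) * (g t * \<theta> t) * cis (- (of_int (int n) * t))
        = g t * cis (- (of_int (int n) * t))"
      using inner_funD(2)[OF \<theta>]
    proof eventually_elim
      case (elim t)
      then have "cnj (\<theta> t) * \<theta> t = 1"
        by (simp add: complex_norm_square[symmetric] mult.commute)
      moreover have "cnj (\<theta> t) * (g t * \<theta> t) * cis (- (of_int (int n) * t))
          = (cnj (\<theta> t) * \<theta> t) * (g t * cis (- (of_int (int n) * t)))"
        by (simp only: mult_ac)
      ultimately show ?case by simp
    qed
  qed
  then show "toeplitz_conj_coeffs \<theta> (\<lambda>t. g t * \<theta> t) n = Pplus_coeffs g n"
    by (simp add: toeplitz_conj_coeffs_def Pplus_coeffs_def fourier_coeff_def)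
qed

section \<open>Abel summation against a nondecreasing weight\<close>

lemma suminf_swap_ennreal:
  fixes f :: "nat \<Rightarrow> nat \<Rightarrow> ennreal"
  shows "(\<Sum>n. \<Sum>k. f n k) = (\<Sum>k. \<Sum>n. f n k)"
proof -
  have "(\<Sum>n. \<Sum>k. f n k) = (\<integral>\<^sup>+n. (\<Sum>k. f n k) \<partial>count_space UNIV)"
    by (simp add: nn_integral_count_space_nat)
  also have "\<dots> = (\<Sum>k. \<integral>\<^sup>+n. f n k \<partial>count_space UNIV)"
    by (rule nn_integral_suminf) simp
  also have "\<dots> = (\<Sum>k. \<Sum>n. f n k)"
    by (simp add: nn_integral_count_space_nat)
  finally show ?thesis .
qed

lemma suminf_weighted_eq_tails:
  fixes v w z :: "nat \<Rightarrow> real"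
  assumes v_eq: "\<And>n. v n = (\<Sum>k\<le>n. w k)" and w: "\<And>k. 0 \<le> w k" and z: "\<And>n. 0 \<le> z n"
  shows "(\<Sum>n. ennreal (v n * z n)) = (\<Sum>k. ennreal (w k) * (\<Sum>n. ennreal (if k \<le> n then z n else 0)))"
proof -
  have "ennreal (v n * z n) = (\<Sum>k. ennreal (w k) * ennreal (if k \<le> n then z n else 0))" for n
  proof -
    have "ennreal (v n * z n) = ennreal (\<Sum>k\<le>n. w k * z n)"
      by (simp add: v_eq sum_distrib_right)
    also have "\<dots> = (\<Sum>k\<le>n. ennreal (w k * z n))"
      using w z by (simp add: sum_ennreal)
    also have "\<dots> = (\<Sum>k\<le>n. ennreal (w k) * ennreal (z n))"
      using w z by (simp add: ennreal_mult)
    also have "\<dots> = (\<Sum>k. ennreal (w k) * ennreal (if k \<le> n then z n else 0))"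
      by (subst suminf_finite[of "{..n}"]) auto
    finally show ?thesis .
  qed
  then have "(\<Sum>n. ennreal (v n * z n))
      = (\<Sum>n. \<Sum>k. ennreal (w k) * ennreal (if k \<le> n then z n else 0))"
    by simp
  also have "\<dots> = (\<Sum>k. ennreal (w k) * (\<Sum>n. ennreal (if k \<le> n then z n else 0)))"
    by (simp add: suminf_swap_ennreal[of "\<lambda>n k. ennreal (w k) * _ n k"])
  finally show ?thesis .
qed

lemma suminf_weighted_le_of_tails_le:
  fixes v x y :: "nat \<Rightarrow> real"
  assumes "mono v" "0 \<le> v 0" "\<And>n. 0 \<le> x n" "\<And>n. 0 \<le> y n"
    and tails: "\<And>k. (\<Sum>n. ennreal (if k \<le> n then x n else 0)) \<le> (\<Sum>n. ennreal (if k \<le> n then y n else 0))"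
  shows "(\<Sum>n. ennreal (v n * x n)) \<le> (\<Sum>n. ennreal (v n * y n))"
proof -
  define w where "w k = (case k of 0 \<Rightarrow> v 0 | Suc j \<Rightarrow> v (Suc j) - v j)" for k
  have v_eq: "v n = (\<Sum>k\<le>n. w k)" for n
    by (induction n) (auto simp: w_def)
  have w: "0 \<le> w k" for k
    using assms(1,2) by (cases k) (auto simp: w_def mono_def)
  show ?thesis
    unfolding suminf_weighted_eq_tails[OF v_eq w assms(3)] suminf_weighted_eq_tails[OF v_eq w assms(4)]
    by (intro suminf_le summableI mult_left_mono tails) simp
qed

lemma ennsqrt_mono: "a \<le> b \<Longrightarrow> ennsqrt a \<le> ennsqrt b"
  by (cases "b = top") (auto simp: ennsqrt_def top_unique less_top intro!: ennreal_leI enn2real_mono)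

lemma vnorm_mono_tails:
  assumes "mono v" "0 \<le> v 0" "\<And>k. coeff_tail a k \<le> coeff_tail b k"
  shows "vnorm v a \<le> vnorm v b"
  unfolding vnorm_def
  by (intro ennsqrt_mono suminf_weighted_le_of_tails_le) (use assms in \<open>auto simp: coeff_tail_def\<close>)

theorem corollary3p3:
  fixes v :: "nat \<Rightarrow> real" and \<theta> :: "real \<Rightarrow> complex"
  assumes "\<forall>n. v n > 0" and "mono v"
    and "inner_fun \<theta>"
  shows "(\<forall>f \<in> H2. vnorm v (toeplitz_conj_coeffs \<theta> f) \<le> vnorm v (Pplus_coeffs f)) \<and>
         (\<forall>g \<in> H2. vnorm v (Pplus_coeffs g) \<le> vnorm v (Pplus_coeffs (\<lambda>t. g t * \<theta> t)))"
proof -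
  have v0: "0 \<le> v 0" using assms(1) by (simp add: less_imp_le)
  have toeplitz: "vnorm v (toeplitz_conj_coeffs \<theta> f) \<le> vnorm v (Pplus_coeffs f)" if "f \<in> H2" for f
    by (rule vnorm_mono_tails[OF assms(2) v0 toeplitz_tail_le[OF assms(3) that]])
  have "vnorm v (Pplus_coeffs g) \<le> vnorm v (Pplus_coeffs (\<lambda>t. g t * \<theta> t))" if "g \<in> H2" for g
    using toeplitz[OF H2_mult_inner[OF assms(3) that]]
      toeplitz_conj_mult_inner[OF assms(3) L2_circ_measurable] that
    by (simp add: H2_def)
  with toeplitz show ?thesis by blast
qed

end
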